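(* For every \textsc{Strip Cover} instance $(x,b)$, $\mathrm{RR}(x,b)=\sum_{i=1}^n b_i/r_i\ge\frac{2}{3}\,\mathrm{Opt}_{SC}(x,b)$, where $r_i=\max\{x_i,1-x_i\}$ and $\mathrm{Opt}_{SC}(x,b)$ is the optimal \textsc{Strip Cover} lifetime. That is, \textsc{RoundRobin} is a $\frac{3}{2}$-approximation algorithm for \textsc{Strip Cover}.
   Context: \textsc{Strip Cover}: An instance is a pair $(x,b)$, where $x=(x_1,\ldots,x_n)\in[0,1]^n$ with $x_1\le\cdots\le x_n$ are sensor locations and $b=(b_1,\ldots,b_n)$, $b_i\ge0$ rational, are battery charges. A solution is a vector $\rho(t)=(\rho_1(t),\ldots,\rho_n(t))$ of piecewise constant functions $\rho_i:[0,\infty)\to[0,\infty)$ with finitely many pieces (the radius of sensor $i$ at time $t$), subject to $\int_0^\infty\rho_i(t)\,dt\le b_i$ for every $i$. The interval $[0,1]$ is covered at time $t$ if $[0,1]\subseteq\bigcup_i[x_i-\rho_i(t),x_i+\rho_i(t)]$. The lifetime of a solution is the maximum $T$ such that $[0,1]$ is covered at all $t\in[0,T]$; $\mathrm{Opt}_{SC}(x,b)$ is the maximum lifetime. The \textsc{RoundRobin} solution lets the sensors take turns in order $1,\ldots,n$, sensor $i$ alone using radius $r_i=\max\{x_i,1-x_i\}$ (which covers $[0,1]$) for $b_i/r_i$ time units, giving lifetime $\mathrm{RR}(x,b)=\sum_i b_i/r_i$. *)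

theory Defs
  imports "HOL-Analysis.Analysis"
begin

text \<open>Sensors are indexed by 0..n-1 (the paper uses 1..n).\<close>

definition sc_instance :: "nat \<Rightarrow> (nat \<Rightarrow> real) \<Rightarrow> (nat \<Rightarrow> real) \<Rightarrow> bool" where
  "sc_instance n x b \<longleftrightarrow>
     (\<forall>i<n. 0 \<le> x i \<and> x i \<le> 1) \<and>
     (\<forall>i j. i \<le> j \<longrightarrow> j < n \<longrightarrow> x i \<le> x j) \<and>
     (\<forall>i<n. 0 \<le> b i \<and> b i \<in> \<rat>)"

definition piecewise_const :: "(real \<Rightarrow> real) \<Rightarrow> bool" where
  "piecewise_const f \<longleftrightarrow>
     (\<exists>S. finite S \<and>
        (\<forall>a c. 0 \<le> a \<longrightarrow> {a<..<c} \<inter> S = {} \<longrightarrow>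
           (\<forall>s\<in>{a<..<c}. \<forall>t\<in>{a<..<c}. f s = f t)))"

definition sc_feasible :: "nat \<Rightarrow> (nat \<Rightarrow> real) \<Rightarrow> (nat \<Rightarrow> real \<Rightarrow> real) \<Rightarrow> bool" where
  "sc_feasible n b \<rho> \<longleftrightarrow>
     (\<forall>i<n. piecewise_const (\<rho> i) \<and> (\<forall>t\<ge>0. 0 \<le> \<rho> i t) \<and>
        (\<integral>\<^sup>+ t\<in>{0..}. ennreal (\<rho> i t) \<partial>lborel) \<le> ennreal (b i))"

definition sc_covered :: "nat \<Rightarrow> (nat \<Rightarrow> real) \<Rightarrow> (nat \<Rightarrow> real \<Rightarrow> real) \<Rightarrow> real \<Rightarrow> bool" where
  "sc_covered n x \<rho> t \<longleftrightarrow> {0..1} \<subseteq> (\<Union>i<n. {x i - \<rho> i t .. x i + \<rho> i t})"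

text \<open>Optimal lifetime: supremum of all T \<ge> 0 such that some feasible solution covers
  [0,1] at every time in [0,T]. 0 is inserted so the set is never empty (only relevant for n = 0).\<close>
definition opt_sc :: "nat \<Rightarrow> (nat \<Rightarrow> real) \<Rightarrow> (nat \<Rightarrow> real) \<Rightarrow> real" where
  "opt_sc n x b = Sup (insert 0 {T. 0 \<le> T \<and>
      (\<exists>\<rho>. sc_feasible n b \<rho> \<and> (\<forall>t\<in>{0..T}. sc_covered n x \<rho> t))})"

definition round_robin :: "nat \<Rightarrow> (nat \<Rightarrow> real) \<Rightarrow> (nat \<Rightarrow> real) \<Rightarrow> real" where
  "round_robin n x b = (\<Sum>i<n. b i / max (x i) (1 - x i))"

end

theory Submission
  imports Defs
begin

text \<open>
  Weigh the points of [0,1] by the density 2/(2-p)^2 on [0,1/2] and 2/(1+p)^2 on [1/2,1], whose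
  distribution function is cover_weight and whose total mass is 2/3.
  A sensor at x with radius \<rho> covers weight at most \<rho> / max x (1 - x), so at every time at which
  [0,1] is covered the normalised radii satisfy \<Sum>i \<rho>_i(t)/r_i \<ge> 2/3.
  Integrating this over [0,T] against the battery budgets gives 2/3 T \<le> \<Sum>i b_i/r_i.
\<close>

definition cover_weight :: "real \<Rightarrow> real" where
  "cover_weight p = (if p \<le> 1/2 then p / (2 - p) else 2/3 - (1 - p) / (1 + p))"

lemma cover_weight_lower_half: "p \<le> 1/2 \<Longrightarrow> cover_weight p = p / (2 - p)"
  by (simp add: cover_weight_def)

lemma cover_weight_upper_half: "1/2 \<le> p \<Longrightarrow> cover_weight p = 2/3 - (1 - p) / (1 + p)"
proof (cases "p = 1/2")
  case True
  show ?thesis by (simp add: cover_weight_def True)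
qed (simp add: cover_weight_def)

lemma cover_weight_reflect:
  "0 \<le> p \<Longrightarrow> p \<le> 1 \<Longrightarrow> cover_weight (1 - p) = 2/3 - cover_weight p"
  by (cases "p \<le> 1/2") (simp_all add: cover_weight_lower_half cover_weight_upper_half)

lemma cover_weight_mono:
  assumes "0 \<le> p" "p \<le> q" "q \<le> 1"
  shows "cover_weight p \<le> cover_weight q"
proof -
  consider "q \<le> 1/2" | "1/2 \<le> p" | "p \<le> 1/2" "1/2 \<le> q" by linarith
  then show ?thesis
  proof cases
    case 1
    then show ?thesis using assms by (simp add: cover_weight_lower_half frac_le)
  next
    case 2
    have "(1 - q) / (1 + q) \<le> (1 - p) / (1 + p)"
      using assms by (simp add: divide_simps) (simp add: algebra_simps)
    then show ?thesis using 2 assms by (simp add: cover_weight_upper_half)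
  next
    case 3
    have "p / (2 - p) \<le> 1/3" "(1 - q) / (1 + q) \<le> 1/3"
      using 3 assms by (simp_all add: divide_simps)
    moreover have "cover_weight p = p / (2 - p)" "cover_weight q = 2/3 - (1 - q) / (1 + q)"
      using 3 by (simp_all add: cover_weight_lower_half cover_weight_upper_half)
    ultimately show ?thesis by linarith
  qed
qed

lemma cover_weight_le: "0 \<le> p \<Longrightarrow> p \<le> 1 \<Longrightarrow> cover_weight p \<le> 2/3"
  using cover_weight_mono[of p 1] by (simp add: cover_weight_upper_half)

lemma cover_weight_surj:
  assumes "0 \<le> y" "y \<le> 2/3"
  obtains p where "0 \<le> p" "p \<le> 1" "cover_weight p = y"
proof (cases "y \<le> 1/3")
  case True
  define p where "p = 2 * y / (1 + y)"
  have "0 \<le> p" "p \<le> 1/2" using True assms by (simp_all add: p_def divide_simps)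
  moreover have "p / (2 - p) = y" using assms by (simp add: p_def field_simps)
  ultimately show ?thesis by (intro that[of p]) (simp_all add: cover_weight_lower_half)
next
  case False
  define p where "p = (1 + 3 * y) / (5 - 3 * y)"
  have "1/2 \<le> p" "p \<le> 1" using False assms by (simp_all add: p_def divide_simps)
  moreover have "(1 - p) / (1 + p) = 2/3 - y" using assms by (simp add: p_def field_simps)
  ultimately show ?thesis by (intro that[of p]) (simp_all add: cover_weight_upper_half)
qed

lemma divide_le_divide_of_mult_le:
  fixes a b c d :: real
  assumes "0 < b" "0 < d" "a * d \<le> c * b"
  shows "a / b \<le> c / d"
  using assms by (simp add: divide_simps)

lemma cover_weight_gain_upper_half:
  fixes x \<rho> :: real
  assumes "1/2 \<le> x - \<rho>" "x + \<rho> \<le> 1" "0 \<le> \<rho>"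
  shows "cover_weight (x + \<rho>) - cover_weight (x - \<rho>) \<le> \<rho> / x"
proof -
  have "cover_weight (x + \<rho>) - cover_weight (x - \<rho>)
      = (1 - (x - \<rho>)) / (1 + (x - \<rho>)) - (1 - (x + \<rho>)) / (1 + (x + \<rho>))"
    using assms by (simp add: cover_weight_upper_half)
  also have "\<dots> = 4 * \<rho> / ((1 + (x - \<rho>)) * (1 + (x + \<rho>)))"
    using assms by (simp add: field_simps)
  also have "\<dots> \<le> \<rho> / x"
  proof (rule divide_le_divide_of_mult_le)
    have "\<rho> * ((1 + (x - \<rho>)) * (1 + (x + \<rho>))) - 4 * \<rho> * x = \<rho> * (1 - x - \<rho>) * (1 - x + \<rho>)"
      by (simp add: algebra_simps)
    moreover have "0 \<le> \<rho> * (1 - x - \<rho>) * (1 - x + \<rho>)"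
      using assms by simp
    ultimately show "4 * \<rho> * x \<le> \<rho> * ((1 + (x - \<rho>)) * (1 + (x + \<rho>)))"
      by linarith
  qed (use assms in auto)
  finally show ?thesis .
qed

lemma cover_weight_gain_upper_half_clipped:
  fixes x \<rho> :: real
  assumes "1/2 \<le> x - \<rho>" "1 \<le> x + \<rho>" "0 \<le> \<rho>"
  shows "cover_weight 1 - cover_weight (x - \<rho>) \<le> \<rho> / x"
proof -
  have "cover_weight 1 - cover_weight (x - \<rho>) = (1 - (x - \<rho>)) / (1 + (x - \<rho>))"
    using assms by (simp add: cover_weight_upper_half)
  also have "\<dots> \<le> \<rho> / x"
  proof (rule divide_le_divide_of_mult_le)
    have "\<rho> * (1 + (x - \<rho>)) - (1 - (x - \<rho>)) * x = (x - \<rho>) * (x + \<rho> - 1)"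
      by (simp add: algebra_simps)
    moreover have "0 \<le> (x - \<rho>) * (x + \<rho> - 1)"
      using assms by simp
    ultimately show "(1 - (x - \<rho>)) * x \<le> \<rho> * (1 + (x - \<rho>))"
      by linarith
  qed (use assms in auto)
  finally show ?thesis .
qed

lemma cover_weight_gain_straddling:
  fixes a c :: real
  assumes "0 \<le> a" "a \<le> 1/2" "1/2 \<le> c" "c \<le> 1" "1 \<le> a + c"
  shows "cover_weight c - cover_weight a \<le> (c - a) / (a + c)"
proof -
  have "cover_weight c - cover_weight a = 2/3 - (1 - c) / (1 + c) - a / (2 - a)"
    using assms by (simp add: cover_weight_lower_half cover_weight_upper_half)
  also have "\<dots> = ((2 - 4 * a) * (1 + c) + (4 * c - 2) * (2 - a)) / (3 * (2 - a) * (1 + c))"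
    using assms by (simp add: field_simps)
  also have "\<dots> \<le> (c - a) / (a + c)"
  proof (rule divide_le_divide_of_mult_le)
    let ?s = "(1/2 - a) * (1 - c) * (3/2 + 5 * (c - 1/2)) + 3/2 * (c - 1/2) * (1 - c)
        + 21/2 * (1/2 - a)^2 + 11 * (1/2 - a)^2 * (c - 1/2)"
    have "(c - a) * (3 * (2 - a) * (1 + c)) - ((2 - 4 * a) * (1 + c) + (4 * c - 2) * (2 - a)) * (a + c) = ?s"
      by (simp add: field_simps power2_eq_square)
    moreover have "0 \<le> ?s"
      using assms by (intro add_nonneg_nonneg mult_nonneg_nonneg) auto
    ultimately show "((2 - 4 * a) * (1 + c) + (4 * c - 2) * (2 - a)) * (a + c) \<le> (c - a) * (3 * (2 - a) * (1 + c))"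
      by linarith
  qed (use assms in auto)
  finally show ?thesis .
qed

lemma cover_weight_gain_straddling_clipped:
  fixes a x :: real
  assumes "0 \<le> a" "a \<le> 1/2" "(1 + a) / 2 \<le> x"
  shows "cover_weight 1 - cover_weight a \<le> (x - a) / x"
proof -
  have "cover_weight 1 - cover_weight a = 2/3 - a / (2 - a)"
    using assms by (simp add: cover_weight_lower_half cover_weight_upper_half)
  also have "\<dots> = (4 - 5 * a) / (3 * (2 - a))"
    using assms by (simp add: field_simps)
  also have "\<dots> \<le> (x - a) / x"
  proof (rule divide_le_divide_of_mult_le)
    have "(x - a) * (3 * (2 - a)) - (4 - 5 * a) * x = (2 + 2 * a) * (x - (1 + a) / 2) + (2 * a - 1)^2"
      by (simp add: field_simps power2_eq_square)
    moreover have "0 \<le> (2 + 2 * a) * (x - (1 + a) / 2) + (2 * a - 1)^2"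
      using assms by (intro add_nonneg_nonneg mult_nonneg_nonneg) auto
    ultimately show "(4 - 5 * a) * x \<le> (x - a) * (3 * (2 - a))"
      by linarith
  qed (use assms in auto)
  finally show ?thesis .
qed

lemma cover_weight_gain_right_sensor:
  fixes x \<rho> :: real
  assumes "1/2 \<le> x" "x \<le> 1" "0 \<le> \<rho>"
  shows "cover_weight (min (x + \<rho>) 1) - cover_weight (max (x - \<rho>) 0) \<le> \<rho> / x"
proof -
  consider "1/2 \<le> x - \<rho>" | "0 \<le> x - \<rho>" "x - \<rho> < 1/2" | "x - \<rho> < 0"
    by linarith
  then show ?thesis
  proof cases
    case 1
    then show ?thesis
      using assms cover_weight_gain_upper_half[of x \<rho>] cover_weight_gain_upper_half_clipped[of x \<rho>]
      by (cases "x + \<rho> \<le> 1") (simp_all add: min_def max_def)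
  next
    case 2
    show ?thesis
    proof (cases "x + \<rho> \<le> 1")
      case True
      have "(x + \<rho> - (x - \<rho>)) / (x - \<rho> + (x + \<rho>)) = \<rho> / x"
        using assms by (simp add: field_simps)
      then show ?thesis
        using 2 True assms cover_weight_gain_straddling[of "x - \<rho>" "x + \<rho>"] by simp
    next
      case False
      have "(x - (x - \<rho>)) / x = \<rho> / x"
        by simp
      then show ?thesis
        using 2 False assms cover_weight_gain_straddling_clipped[of "x - \<rho>" x] by simp
    qed
  next
    case 3
    have "cover_weight (min (x + \<rho>) 1) \<le> 2/3"
      using assms by (intro cover_weight_le) auto
    moreover have "1 \<le> \<rho> / x"
      using 3 assms by (simp add: divide_simps)
    ultimately show ?thesis
      using 3 by (simp add: cover_weight_lower_half)
  qed
qed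

lemma cover_weight_gain_sensor:
  fixes x \<rho> :: real
  assumes "0 \<le> x" "x \<le> 1" "0 \<le> \<rho>"
  shows "cover_weight (min (x + \<rho>) 1) - cover_weight (max (x - \<rho>) 0) \<le> \<rho> / max x (1 - x)"
proof (cases "1/2 \<le> x")
  case True
  then have "max x (1 - x) = x"
    by simp
  then show ?thesis
    using cover_weight_gain_right_sensor[of x \<rho>] assms True by simp
next
  case False
  define y where "y = 1 - x"
  have y: "1/2 \<le> y" "y \<le> 1"
    using False assms by (simp_all add: y_def)
  have "min (x + \<rho>) 1 = 1 - max (y - \<rho>) 0" "max (x - \<rho>) 0 = 1 - min (y + \<rho>) 1"
    by (simp_all add: y_def min_def max_def)
  then have "cover_weight (min (x + \<rho>) 1) - cover_weight (max (x - \<rho>) 0)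
      = cover_weight (min (y + \<rho>) 1) - cover_weight (max (y - \<rho>) 0)"
    using y assms by (simp add: cover_weight_reflect)
  also have "\<dots> \<le> \<rho> / y"
    using cover_weight_gain_right_sensor[OF y assms(3)] .
  finally show ?thesis
    using False by (simp add: y_def max_def)
qed

lemma covering_radius_sum_ge:
  fixes x \<rho> :: "'i \<Rightarrow> real"
  assumes "finite I"
    and x: "\<And>i. i \<in> I \<Longrightarrow> 0 \<le> x i \<and> x i \<le> 1"
    and \<rho>: "\<And>i. i \<in> I \<Longrightarrow> 0 \<le> \<rho> i"
    and cover: "{0..1} \<subseteq> (\<Union>i\<in>I. {x i - \<rho> i .. x i + \<rho> i})"
  shows "2/3 \<le> (\<Sum>i\<in>I. \<rho> i / max (x i) (1 - x i))"
proof -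
  define lo where "lo i = cover_weight (max (x i - \<rho> i) 0)" for i
  define hi where "hi i = cover_weight (min (x i + \<rho> i) 1)" for i
  have lo_le_hi: "lo i \<le> hi i" if "i \<in> I" for i
    unfolding lo_def hi_def using x[OF that] \<rho>[OF that] by (intro cover_weight_mono) auto
  have image_cover: "{0..2/3} \<subseteq> (\<Union>i\<in>I. {lo i .. hi i})"
  proof
    fix y :: real
    assume "y \<in> {0..2/3}"
    then obtain p where p: "0 \<le> p" "p \<le> 1" "cover_weight p = y"
      using cover_weight_surj by auto
    then obtain i where i: "i \<in> I" "x i - \<rho> i \<le> p" "p \<le> x i + \<rho> i"
      using cover by force
    have "lo i \<le> y" "y \<le> hi i"
      unfolding lo_def hi_def p(3)[symmetric] using p i x[OF i(1)] \<rho>[OF i(1)]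
      by (auto intro!: cover_weight_mono)
    then show "y \<in> (\<Union>i\<in>I. {lo i .. hi i})"
      using i(1) by auto
  qed
  have "ennreal (2/3) = emeasure lborel {0..2/3::real}"
    by simp
  also have "\<dots> \<le> emeasure lborel (\<Union>i\<in>I. {lo i .. hi i})"
    using image_cover assms(1) by (intro emeasure_mono) auto
  also have "\<dots> \<le> (\<Sum>i\<in>I. emeasure lborel {lo i .. hi i})"
    using assms(1) by (intro emeasure_subadditive_finite) auto
  also have "\<dots> = ennreal (\<Sum>i\<in>I. hi i - lo i)"
    using lo_le_hi by (simp add: sum_ennreal)
  finally have "2/3 \<le> (\<Sum>i\<in>I. hi i - lo i)"
    using lo_le_hi by (subst (asm) ennreal_le_iff) (auto intro: sum_nonneg)
  also have "\<dots> \<le> (\<Sum>i\<in>I. \<rho> i / max (x i) (1 - x i))"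
    unfolding hi_def lo_def using x \<rho> by (intro sum_mono cover_weight_gain_sensor) auto
  finally show ?thesis .
qed

lemma piecewise_const_extend_borel_measurable:
  assumes "piecewise_const f"
  shows "(\<lambda>t. if 0 \<le> t then f t else 0) \<in> borel_measurable borel"
proof -
  obtain S where "finite S" and S: "\<And>a c. 0 \<le> a \<Longrightarrow> {a<..<c} \<inter> S = {} \<Longrightarrow>
      \<forall>s\<in>{a<..<c}. \<forall>t\<in>{a<..<c}. f s = f t"
    using assms unfolding piecewise_const_def by blast
  define g where "g t = (if 0 \<le> t then f t else 0)" for t :: real
  have "isCont g t" if t: "t \<notin> insert 0 S" for t
  proof -
    obtain e where "e > 0" and e: "\<And>s. s \<in> insert 0 S \<Longrightarrow> e \<le> dist t s"
      using finite_set_avoid[of "insert 0 S" t] \<open>finite S\<close> t by force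
    have "g s = g t" if "dist s t < e" for s
    proof -
      have s: "t - e < s" "s < t + e"
        using \<open>dist s t < e\<close> by (auto simp: dist_real_def)
      have "e \<le> \<bar>t\<bar>"
        using e[of 0] by (simp add: dist_real_def)
      show ?thesis
      proof (cases "t < 0")
        case True
        then show ?thesis
          using s \<open>e \<le> \<bar>t\<bar>\<close> by (simp add: g_def)
      next
        case False
        have "y \<notin> S" if "t - e < y" "y < t + e" for y
          using e[of y] that by (auto simp: dist_real_def)
        then have "{t - e<..<t + e} \<inter> S = {}"
          by auto
        then have "\<forall>s\<in>{t - e<..<t + e}. \<forall>u\<in>{t - e<..<t + e}. f s = f u"
          using False \<open>e \<le> \<bar>t\<bar>\<close> by (intro S) simp_all
        moreover have "s \<in> {t - e<..<t + e}" "t \<in> {t - e<..<t + e}"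
          using s \<open>e > 0\<close> by simp_all
        ultimately have "f s = f t"
          by blast
        then show ?thesis
          using s False \<open>e \<le> \<bar>t\<bar>\<close> by (simp add: g_def)
      qed
    qed
    then have "eventually (\<lambda>s. g s = g t) (nhds t)"
      unfolding eventually_nhds_metric using \<open>e > 0\<close> by blast
    then show ?thesis
      using isCont_cong[of g "\<lambda>_. g t" t] by simp
  qed
  then have "continuous_on (- insert 0 S) g"
    by (intro continuous_at_imp_continuous_on) blast
  then show ?thesis
    unfolding g_def[symmetric]
    by (rule borel_measurable_continuous_countable_exceptions[rotated]) (simp add: \<open>finite S\<close> countable_finite)
qed

lemma integrated_load_bound:
  fixes g :: "'i \<Rightarrow> real \<Rightarrow> real"
  assumes "finite I" "0 \<le> c" "0 \<le> T"
    and w: "\<And>i. i \<in> I \<Longrightarrow> 0 < w i"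
    and b: "\<And>i. i \<in> I \<Longrightarrow> 0 \<le> b i"
    and g_nonneg: "\<And>i t. i \<in> I \<Longrightarrow> 0 \<le> g i t"
    and g_meas: "\<And>i. i \<in> I \<Longrightarrow> g i \<in> borel_measurable borel"
    and g_budget: "\<And>i. i \<in> I \<Longrightarrow> (\<integral>\<^sup>+t. ennreal (g i t) \<partial>lborel) \<le> ennreal (b i)"
    and load: "\<And>t. t \<in> {0..T} \<Longrightarrow> c \<le> (\<Sum>i\<in>I. g i t / w i)"
  shows "c * T \<le> (\<Sum>i\<in>I. b i / w i)"
proof -
  have scaled_budget: "(\<integral>\<^sup>+t. ennreal (g i t / w i) \<partial>lborel) \<le> ennreal (b i / w i)" if i: "i \<in> I" for i
  proof -
    have "(\<integral>\<^sup>+t. ennreal (g i t / w i) \<partial>lborel) = ennreal (1 / w i) * (\<integral>\<^sup>+t. ennreal (g i t) \<partial>lborel)"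
      using g_nonneg[OF i] w[OF i] g_meas[OF i]
      by (subst nn_integral_cmult[symmetric]) (auto simp: ennreal_mult[symmetric])
    also have "\<dots> \<le> ennreal (1 / w i) * ennreal (b i)"
      using g_budget[OF i] by (rule mult_left_mono) simp
    also have "\<dots> = ennreal (b i / w i)"
      using b[OF i] w[OF i] by (simp add: ennreal_mult[symmetric])
    finally show ?thesis .
  qed
  have "ennreal (c * T) = (\<integral>\<^sup>+t. ennreal c * indicator {0..T} t \<partial>lborel)"
    using assms(2,3) by (simp add: nn_integral_cmult_indicator ennreal_mult)
  also have "\<dots> \<le> (\<integral>\<^sup>+t. (\<Sum>i\<in>I. ennreal (g i t / w i)) \<partial>lborel)"
  proof (rule nn_integral_mono)
    fix t
    have "(\<Sum>i\<in>I. ennreal (g i t / w i)) = ennreal (\<Sum>i\<in>I. g i t / w i)"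
      using g_nonneg w by (intro sum_ennreal) (simp add: less_imp_le)
    then show "ennreal c * indicator {0..T} t \<le> (\<Sum>i\<in>I. ennreal (g i t / w i))"
      using load by (auto intro: ennreal_leI split: split_indicator)
  qed
  also have "\<dots> = (\<Sum>i\<in>I. \<integral>\<^sup>+t. ennreal (g i t / w i) \<partial>lborel)"
    using g_meas by (intro nn_integral_sum) simp
  also have "\<dots> \<le> (\<Sum>i\<in>I. ennreal (b i / w i))"
    using scaled_budget by (rule sum_mono)
  also have "\<dots> = ennreal (\<Sum>i\<in>I. b i / w i)"
    using b w by (intro sum_ennreal) (simp add: less_imp_le)
  finally show ?thesis
    using b w by (simp add: ennreal_le_iff sum_nonneg less_imp_le)
qed

lemma round_robin_nonneg: "sc_instance n x b \<Longrightarrow> 0 \<le> round_robin n x b"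
  unfolding round_robin_def sc_instance_def by (intro sum_nonneg) simp

lemma lifetime_le_round_robin:
  assumes "sc_instance n x b" "sc_feasible n b \<rho>" "0 \<le> T"
    and cover: "\<And>t. t \<in> {0..T} \<Longrightarrow> sc_covered n x \<rho> t"
  shows "2/3 * T \<le> round_robin n x b"
proof -
  define g where "g i = (\<lambda>t. if 0 \<le> t then \<rho> i t else 0)" for i
  have x: "0 \<le> x i \<and> x i \<le> 1" "0 \<le> b i" if "i < n" for i
    using assms(1) that by (simp_all add: sc_instance_def)
  have \<rho>: "piecewise_const (\<rho> i)" "\<And>t. 0 \<le> t \<Longrightarrow> 0 \<le> \<rho> i t"
      "(\<integral>\<^sup>+t\<in>{0..}. ennreal (\<rho> i t) \<partial>lborel) \<le> ennreal (b i)" if "i < n" for i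
    using assms(2) that by (simp_all add: sc_feasible_def)
  have "2/3 * T \<le> (\<Sum>i<n. b i / max (x i) (1 - x i))"
  proof (rule integrated_load_bound[where g = g])
    show "(\<integral>\<^sup>+t. ennreal (g i t) \<partial>lborel) \<le> ennreal (b i)" if "i \<in> {..<n}" for i
    proof -
      have "(\<integral>\<^sup>+t. ennreal (g i t) \<partial>lborel) = (\<integral>\<^sup>+t\<in>{0..}. ennreal (\<rho> i t) \<partial>lborel)"
        by (intro nn_integral_cong) (simp add: g_def indicator_def)
      then show ?thesis
        using \<rho>(3)[of i] that by simp
    qed
    show "2/3 \<le> (\<Sum>i<n. g i t / max (x i) (1 - x i))" if "t \<in> {0..T}" for t
      using covering_radius_sum_ge[of "{..<n}" x "\<lambda>i. \<rho> i t"] cover[OF that] x \<rho> that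
      by (simp add: g_def sc_covered_def)
  qed (use assms(3) x \<rho> in \<open>auto simp: g_def piecewise_const_extend_borel_measurable\<close>)
  then show ?thesis
    by (simp add: round_robin_def)
qed

theorem theorem3:
  fixes n :: nat and x b :: "nat \<Rightarrow> real"
  assumes "sc_instance n x b"
  shows "round_robin n x b \<ge> (2/3) * opt_sc n x b"
proof -
  have "opt_sc n x b \<le> 3/2 * round_robin n x b"
    unfolding opt_sc_def
  proof (rule cSup_least)
    fix T
    assume "T \<in> insert 0 {T. 0 \<le> T \<and> (\<exists>\<rho>. sc_feasible n b \<rho> \<and> (\<forall>t\<in>{0..T}. sc_covered n x \<rho> t))}"
    then show "T \<le> 3/2 * round_robin n x b"
      using lifetime_le_round_robin[OF assms] round_robin_nonneg[OF assms] by fastforce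
  qed simp
  then show ?thesis
    by simp
qed

end
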